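(* Let $I$ be a countable index set with nested finite subsets $I_1\subset I_2\subset\cdots$, $\bigcup_nI_n=I$, let $W$ be a compact Hausdorff space, and let $m:X^{\mathbb{R}}\to C^*(W)$ be a minimal sequence measure function. Then for every real-valued continuous function $f\in C^*(W)$ and every $\varepsilon>0$ there exists $\mathbf{x}\in X^{\mathbb{R}}$ with $\|m(\mathbf{x})-f\|_\infty<\varepsilon$.
   Context: Frame compatible sequences: nonnegative real $\mathbf{x}$ with $0\le x_1\le|I_1|$, $0\le x_i-x_{i-1}\le|I_i\setminus I_{i-1}|$ ($i\ge2$); $X$ their set, $X^+=\{c\mathbf{x}:\mathbf{x}\in X,c\ge0\}$, $X^{\mathbb{R}}=\{\mathbf{x}^1-\mathbf{x}^2:\mathbf{x}^j\in X^+\}$. $\mathbf{x}\approx\mathbf{y}$ iff $\lim_n(x_n-y_n)/|I_n|=0$; for nonnegative sequences $\mathbf{y}\leqq\mathbf{x}$ iff $\liminf_n(x_n-y_n)/|I_n|\ge0$. For a compact Hausdorff $V$, $C^*(V)$ denotes real continuous functions on $V$. A sequence measure function is a linear map $m:X^{\mathbb{R}}\to C^*(V)$ with $m(\mathbf{x})=m(\mathbf{y})\iff\mathbf{x}\approx\mathbf{y}$ for $\mathbf{x},\mathbf{y}\in X^{\mathbb{R}}$, $m(\mathbf{x})\le m(\mathbf{y})$ pointwise $\iff\mathbf{x}\leqq\mathbf{y}$ for $\mathbf{x},\mathbf{y}\in X^+$, and $m((|I_1|,|I_2|,\dots))=1$. Such $m:X^{\mathbb{R}}\to C^*(W)$ is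 separable if for all $v\ne w$ in $W$ there is $\mathbf{x}\in X^{\mathbb{R}}$ with $m(\mathbf{x})(v)\ne m(\mathbf{x})(w)$; reducible if there is a compact $V\subsetneq W$ such that $\mathbf{x}\mapsto m(\mathbf{x})|_V$ is a sequence measure function $X^{\mathbb{R}}\to C^*(V)$; irreducible if not reducible; minimal if separable and irreducible. *)

theory Defs
  imports "HOL-Analysis.Analysis"
begin

text \<open>Sequences are indexed from 0: x 0 stands for x_1, I 0 for I_1, etc.\<close>

definition frame_compatible :: "(nat \<Rightarrow> 'a set) \<Rightarrow> (nat \<Rightarrow> real) \<Rightarrow> bool" where
  "frame_compatible I x \<longleftrightarrow>
     (\<forall>n. 0 \<le> x n) \<and>
     0 \<le> x 0 \<and> x 0 \<le> real (card (I 0)) \<and>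
     (\<forall>n. 0 \<le> x (Suc n) - x n \<and> x (Suc n) - x n \<le> real (card (I (Suc n) - I n)))"

definition Xset :: "(nat \<Rightarrow> 'a set) \<Rightarrow> (nat \<Rightarrow> real) set" where
  "Xset I = {x. frame_compatible I x}"

definition Xplus :: "(nat \<Rightarrow> 'a set) \<Rightarrow> (nat \<Rightarrow> real) set" where
  "Xplus I = {(\<lambda>n. c * x n) | c x. c \<ge> 0 \<and> x \<in> Xset I}"

definition XR :: "(nat \<Rightarrow> 'a set) \<Rightarrow> (nat \<Rightarrow> real) set" where
  "XR I = {(\<lambda>n. x1 n - x2 n) | x1 x2. x1 \<in> Xplus I \<and> x2 \<in> Xplus I}"

definition seq_approx :: "(nat \<Rightarrow> 'a set) \<Rightarrow> (nat \<Rightarrow> real) \<Rightarrow> (nat \<Rightarrow> real) \<Rightarrow> bool" where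
  "seq_approx I x y \<longleftrightarrow> (\<lambda>n. (x n - y n) / real (card (I n))) \<longlonglongrightarrow> 0"

definition seq_leqq :: "(nat \<Rightarrow> 'a set) \<Rightarrow> (nat \<Rightarrow> real) \<Rightarrow> (nat \<Rightarrow> real) \<Rightarrow> bool" where
  "seq_leqq I y x \<longleftrightarrow> liminf (\<lambda>n. ereal ((x n - y n) / real (card (I n)))) \<ge> 0"

text \<open>m is a sequence measure function X^R \<rightarrow> C*(V), where functions are compared on V only.\<close>
definition seq_measure_fun_on ::
  "(nat \<Rightarrow> 'a set) \<Rightarrow> 'w::topological_space set \<Rightarrow> ((nat \<Rightarrow> real) \<Rightarrow> 'w \<Rightarrow> real) \<Rightarrow> bool" where
  "seq_measure_fun_on I V m \<longleftrightarrow>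
     (\<forall>x\<in>XR I. continuous_on V (m x)) \<and>
     (\<forall>x\<in>XR I. \<forall>y\<in>XR I. \<forall>w\<in>V. m (\<lambda>n. x n + y n) w = m x w + m y w) \<and>
     (\<forall>c. \<forall>x\<in>XR I. \<forall>w\<in>V. m (\<lambda>n. c * x n) w = c * m x w) \<and>
     (\<forall>x\<in>XR I. \<forall>y\<in>XR I. (\<forall>w\<in>V. m x w = m y w) \<longleftrightarrow> seq_approx I x y) \<and>
     (\<forall>x\<in>Xplus I. \<forall>y\<in>Xplus I. (\<forall>w\<in>V. m x w \<le> m y w) \<longleftrightarrow> seq_leqq I x y) \<and>
     (\<forall>w\<in>V. m (\<lambda>n. real (card (I n))) w = 1)"

definition separable_smf ::
  "(nat \<Rightarrow> 'a set) \<Rightarrow> 'w::topological_space set \<Rightarrow> ((nat \<Rightarrow> real) \<Rightarrow> 'w \<Rightarrow> real) \<Rightarrow> bool" where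
  "separable_smf I W m \<longleftrightarrow>
     (\<forall>v\<in>W. \<forall>w\<in>W. v \<noteq> w \<longrightarrow> (\<exists>x\<in>XR I. m x v \<noteq> m x w))"

definition reducible_smf ::
  "(nat \<Rightarrow> 'a set) \<Rightarrow> 'w::topological_space set \<Rightarrow> ((nat \<Rightarrow> real) \<Rightarrow> 'w \<Rightarrow> real) \<Rightarrow> bool" where
  "reducible_smf I W m \<longleftrightarrow>
     (\<exists>V. compact V \<and> V \<subset> W \<and> seq_measure_fun_on I V m)"

definition minimal_smf ::
  "(nat \<Rightarrow> 'a set) \<Rightarrow> 'w::topological_space set \<Rightarrow> ((nat \<Rightarrow> real) \<Rightarrow> 'w \<Rightarrow> real) \<Rightarrow> bool" where
  "minimal_smf I W m \<longleftrightarrow> separable_smf I W m \<and> \<not> reducible_smf I W m"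

end

theory Submission
  imports Defs
begin

(* By the lattice form of the Stone-Weierstrass theorem it suffices that the image m(X^R), a
   space of continuous functions containing the constants and separating points, is closed under
   pointwise max. Since X^R is closed under max and m is monotone, m (max x y) >= max (m x) (m y).
   If this were strict at some w0, the set V where m (max x y) <= max (m x) (m y) + delta would be
   a proper closed subset, and m restricted to V would still reflect the order of X^R, i.e. it
   would be a sequence measure function on V, contradicting irreducibility. *)

section \<open>Lattice form of the Stone-Weierstrass theorem\<close>

lemma Min_image_closed:
  fixes L :: "('w \<Rightarrow> real) set"
  assumes min: "\<And>g h. g \<in> L \<Longrightarrow> h \<in> L \<Longrightarrow> (\<lambda>w. min (g w) (h w)) \<in> L"
    and "finite T" "T \<noteq> {}" "\<And>t. t \<in> T \<Longrightarrow> g t \<in> L"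
  shows "(\<lambda>w. Min ((\<lambda>t. g t w) ` T)) \<in> L"
  using assms(2-4)
proof (induction T rule: finite_ne_induct)
  case (singleton t)
  then show ?case by simp
next
  case (insert t T)
  then have "(\<lambda>w. Min ((\<lambda>t. g t w) ` insert t T)) = (\<lambda>w. min (g t w) (Min ((\<lambda>t. g t w) ` T)))"
    by simp
  then show ?case using insert min by simp
qed

lemma Max_image_closed:
  fixes L :: "('w \<Rightarrow> real) set"
  assumes max: "\<And>g h. g \<in> L \<Longrightarrow> h \<in> L \<Longrightarrow> (\<lambda>w. max (g w) (h w)) \<in> L"
    and "finite T" "T \<noteq> {}" "\<And>t. t \<in> T \<Longrightarrow> g t \<in> L"
  shows "(\<lambda>w. Max ((\<lambda>t. g t w) ` T)) \<in> L"
  using assms(2-4)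
proof (induction T rule: finite_ne_induct)
  case (singleton t)
  then show ?case by simp
next
  case (insert t T)
  then have "(\<lambda>w. Max ((\<lambda>t. g t w) ` insert t T)) = (\<lambda>w. max (g t w) (Max ((\<lambda>t. g t w) ` T)))"
    by simp
  then show ?case using insert max by simp
qed

lemma lattice_min_below:
  fixes L :: "('w::topological_space \<Rightarrow> real) set"
  assumes compact: "compact (UNIV :: 'w set)"
    and min: "\<And>g h. g \<in> L \<Longrightarrow> h \<in> L \<Longrightarrow> (\<lambda>w. min (g w) (h w)) \<in> L"
    and F: "continuous_on UNIV F"
    and g: "\<And>t. g t \<in> L" "\<And>t. continuous_on UNIV (g t)" "\<And>t. g t t < F t"
  shows "\<exists>h\<in>L. \<forall>w. h w < F w \<and> (\<exists>t. h w = g t w)"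
proof -
  have "open {w. g t w < F w}" for t
    using g(2) F by (rule open_Collect_less)
  moreover have "UNIV \<subseteq> (\<Union>t\<in>UNIV. {w. g t w < F w})"
    using g(3) by blast
  ultimately obtain T where T: "T \<subseteq> UNIV" "finite T" "UNIV \<subseteq> (\<Union>t\<in>T. {w. g t w < F w})"
    by (rule compactE_image[OF compact])
  then have "T \<noteq> {}" by blast
  define h where "h w = Min ((\<lambda>t. g t w) ` T)" for w
  have "h \<in> L"
    unfolding h_def using Min_image_closed[OF min T(2) \<open>T \<noteq> {}\<close>] g(1) by blast
  moreover have "h w < F w \<and> (\<exists>t. h w = g t w)" for w
  proof
    obtain t where t: "t \<in> T" "g t w < F w"
      using T(3) by blast
    have "h w \<le> g t w"
      unfolding h_def using T(2) t(1) by (intro Min_le) auto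
    then show "h w < F w"
      using t(2) by linarith
    have "h w \<in> (\<lambda>t. g t w) ` T"
      unfolding h_def using T(2) \<open>T \<noteq> {}\<close> by (intro Min_in) auto
    then show "\<exists>t. h w = g t w" by blast
  qed
  ultimately show ?thesis by blast
qed

lemma lattice_max_above:
  fixes L :: "('w::topological_space \<Rightarrow> real) set"
  assumes compact: "compact (UNIV :: 'w set)"
    and max: "\<And>g h. g \<in> L \<Longrightarrow> h \<in> L \<Longrightarrow> (\<lambda>w. max (g w) (h w)) \<in> L"
    and F: "continuous_on UNIV F"
    and g: "\<And>t. g t \<in> L" "\<And>t. continuous_on UNIV (g t)" "\<And>t. F t < g t t"
  shows "\<exists>h\<in>L. \<forall>w. F w < h w \<and> (\<exists>t. h w = g t w)"
proof -
  have "open {w. F w < g t w}" for t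
    using F g(2) by (rule open_Collect_less)
  moreover have "UNIV \<subseteq> (\<Union>t\<in>UNIV. {w. F w < g t w})"
    using g(3) by blast
  ultimately obtain T where T: "T \<subseteq> UNIV" "finite T" "UNIV \<subseteq> (\<Union>t\<in>T. {w. F w < g t w})"
    by (rule compactE_image[OF compact])
  then have "T \<noteq> {}" by blast
  define h where "h w = Max ((\<lambda>t. g t w) ` T)" for w
  have "h \<in> L"
    unfolding h_def using Max_image_closed[OF max T(2) \<open>T \<noteq> {}\<close>] g(1) by blast
  moreover have "F w < h w \<and> (\<exists>t. h w = g t w)" for w
  proof
    obtain t where t: "t \<in> T" "F w < g t w"
      using T(3) by blast
    have "g t w \<le> h w"
      unfolding h_def using T(2) t(1) by (intro Max_ge) auto
    then show "F w < h w"
      using t(2) by linarith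
    have "h w \<in> (\<lambda>t. g t w) ` T"
      unfolding h_def using T(2) \<open>T \<noteq> {}\<close> by (intro Max_in) auto
    then show "\<exists>t. h w = g t w" by blast
  qed
  ultimately show ?thesis by blast
qed

lemma lattice_approximation:
  fixes L :: "('w::topological_space \<Rightarrow> real) set"
  assumes compact: "compact (UNIV :: 'w set)"
    and cont: "\<And>g. g \<in> L \<Longrightarrow> continuous_on UNIV g"
    and min: "\<And>g h. g \<in> L \<Longrightarrow> h \<in> L \<Longrightarrow> (\<lambda>w. min (g w) (h w)) \<in> L"
    and max: "\<And>g h. g \<in> L \<Longrightarrow> h \<in> L \<Longrightarrow> (\<lambda>w. max (g w) (h w)) \<in> L"
    and interpolating: "\<And>s t. \<exists>g\<in>L. g s = f s \<and> g t = f t"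
    and f: "continuous_on UNIV f" and e: "e > 0"
  shows "\<exists>g\<in>L. \<forall>w. \<bar>g w - f w\<bar> < e"
proof -
  obtain G where G: "\<And>s t. G s t \<in> L" "\<And>s t. G s t s = f s" "\<And>s t. G s t t = f t"
    using interpolating by metis
  have "\<exists>h\<in>L. (\<forall>w. h w < f w + e) \<and> h s = f s" for s
  proof -
    have "\<exists>h\<in>L. \<forall>w. h w < f w + e \<and> (\<exists>t. h w = G s t w)"
      by (rule lattice_min_below[OF compact min]) (use f G cont e in \<open>auto intro: continuous_intros\<close>)
    then obtain h t where "h \<in> L" "\<And>w. h w < f w + e" "h s = G s t s"
      by metis
    then show ?thesis
      using G(2) by auto
  qed
  then obtain H where H: "\<And>s. H s \<in> L" "\<And>s w. H s w < f w + e" "\<And>s. H s s = f s"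
    by metis
  have "\<exists>h\<in>L. \<forall>w. f w - e < h w \<and> (\<exists>s. h w = H s w)"
    by (rule lattice_max_above[OF compact max]) (use f H cont e in \<open>auto intro: continuous_intros\<close>)
  then obtain h where h: "h \<in> L" "\<And>w. f w - e < h w" "\<And>w. h w < f w + e"
    using H(2) by metis
  moreover have "\<bar>h w - f w\<bar> < e" for w
    using h(2)[of w] h(3)[of w] by (simp add: abs_less_iff)
  ultimately show ?thesis by blast
qed

lemma lattice_Stone_Weierstrass:
  fixes L :: "('w::topological_space \<Rightarrow> real) set"
  assumes compact: "compact (UNIV :: 'w set)"
    and cont: "\<And>g. g \<in> L \<Longrightarrow> continuous_on UNIV g"
    and add: "\<And>g h. g \<in> L \<Longrightarrow> h \<in> L \<Longrightarrow> (\<lambda>w. g w + h w) \<in> L"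
    and scale: "\<And>g c. g \<in> L \<Longrightarrow> (\<lambda>w. c * g w) \<in> L"
    and const: "\<And>c. (\<lambda>w. c) \<in> L"
    and max: "\<And>g h. g \<in> L \<Longrightarrow> h \<in> L \<Longrightarrow> (\<lambda>w. max (g w) (h w)) \<in> L"
    and separating: "\<And>s t. s \<noteq> t \<Longrightarrow> \<exists>g\<in>L. g s \<noteq> g t"
    and f: "continuous_on UNIV f" and e: "e > 0"
  shows "\<exists>g\<in>L. \<forall>w. \<bar>g w - f w\<bar> < e"
proof (rule lattice_approximation[OF compact cont _ max _ f e])
  fix g h assume "g \<in> L" "h \<in> L"
  then have "(\<lambda>w. (g w + h w) + (-1) * max (g w) (h w)) \<in> L"
    by (intro add scale max)
  moreover have "(\<lambda>w. (g w + h w) + (-1) * max (g w) (h w)) = (\<lambda>w. min (g w) (h w))"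
    by (auto simp: max_def min_def)
  ultimately show "(\<lambda>w. min (g w) (h w)) \<in> L" by simp
next
  fix s t
  show "\<exists>g\<in>L. g s = f s \<and> g t = f t"
  proof (cases "s = t")
    case True
    then show ?thesis using const[of "f s"] by auto
  next
    case False
    then obtain g where g: "g \<in> L" "g s \<noteq> g t" using separating by blast
    define k where "k = (f t - f s) / (g t - g s)"
    have "(\<lambda>w. f s + k * (g w + - g s)) \<in> L"
      using g(1) by (intro add scale const)
    moreover have "f s + k * (g t + - g s) = f t"
      using g(2) by (simp add: k_def)
    ultimately show ?thesis
      by (intro bexI[of _ "\<lambda>w. f s + k * (g w + - g s)"]) auto
  qed
qed

section \<open>Frame compatible sequences\<close>

definition scaled_frame_compatible :: "(nat \<Rightarrow> 'a set) \<Rightarrow> real \<Rightarrow> (nat \<Rightarrow> real) \<Rightarrow> bool" where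
  "scaled_frame_compatible I c x \<longleftrightarrow>
     (\<forall>n. 0 \<le> x n) \<and> x 0 \<le> c * real (card (I 0)) \<and>
     (\<forall>n. x n \<le> x (Suc n) \<and> x (Suc n) - x n \<le> c * real (card (I (Suc n) - I n)))"

lemma scaled_frame_compatible_mono:
  "scaled_frame_compatible I c x \<Longrightarrow> c \<le> d \<Longrightarrow> scaled_frame_compatible I d x"
  unfolding scaled_frame_compatible_def by (meson mult_right_mono of_nat_0_le_iff order_trans)

lemma scaled_frame_compatible_add:
  "scaled_frame_compatible I c x \<Longrightarrow> scaled_frame_compatible I d y \<Longrightarrow>
    scaled_frame_compatible I (c + d) (\<lambda>n. x n + y n)"
  unfolding scaled_frame_compatible_def by (auto simp: distrib_right) (smt (verit))+

lemma scaled_frame_compatible_scale: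
  "0 \<le> k \<Longrightarrow> scaled_frame_compatible I c x \<Longrightarrow> scaled_frame_compatible I (k * c) (\<lambda>n. k * x n)"
  unfolding scaled_frame_compatible_def
  by (auto simp: mult.assoc mult_left_mono simp flip: right_diff_distrib)

lemma scaled_frame_compatible_max:
  "scaled_frame_compatible I c x \<Longrightarrow> scaled_frame_compatible I c y \<Longrightarrow>
    scaled_frame_compatible I c (\<lambda>n. max (x n) (y n))"
  unfolding scaled_frame_compatible_def by (auto simp: max_def) (smt (verit))+

lemma scaled_frame_compatible_one_iff: "scaled_frame_compatible I 1 x \<longleftrightarrow> x \<in> Xset I"
  unfolding scaled_frame_compatible_def Xset_def frame_compatible_def by auto

lemma Xplus_iff: "x \<in> Xplus I \<longleftrightarrow> (\<exists>c\<ge>0. scaled_frame_compatible I c x)"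
proof
  assume "x \<in> Xplus I"
  then obtain c y where "c \<ge> 0" "y \<in> Xset I" "x = (\<lambda>n. c * y n)"
    unfolding Xplus_def by blast
  then show "\<exists>c\<ge>0. scaled_frame_compatible I c x"
    using scaled_frame_compatible_scale[of c I 1 y] scaled_frame_compatible_one_iff by auto
next
  assume "\<exists>c\<ge>0. scaled_frame_compatible I c x"
  then obtain c where "c \<ge> 0" and "scaled_frame_compatible I c x"
    by blast
  from this(2) have "scaled_frame_compatible I (c + 1) x"
    by (rule scaled_frame_compatible_mono) simp
  then have "scaled_frame_compatible I (inverse (c + 1) * (c + 1)) (\<lambda>n. inverse (c + 1) * x n)"
    using \<open>c \<ge> 0\<close> by (intro scaled_frame_compatible_scale) auto
  then have "(\<lambda>n. inverse (c + 1) * x n) \<in> Xset I"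
    using \<open>c \<ge> 0\<close> by (simp flip: scaled_frame_compatible_one_iff)
  moreover have "x = (\<lambda>n. (c + 1) * (inverse (c + 1) * x n))"
    using \<open>c \<ge> 0\<close> by (simp add: mult.assoc[symmetric] add_nonneg_eq_0_iff)
  moreover have "c + 1 \<ge> 0"
    using \<open>c \<ge> 0\<close> by simp
  ultimately show "x \<in> Xplus I"
    unfolding Xplus_def by (intro CollectI exI[of _ "c + 1"] exI[of _ "\<lambda>n. inverse (c + 1) * x n"]) simp
qed

lemma Xplus_add:
  assumes "x \<in> Xplus I" "y \<in> Xplus I"
  shows "(\<lambda>n. x n + y n) \<in> Xplus I"
proof -
  obtain c d where "c \<ge> 0" "d \<ge> 0" "scaled_frame_compatible I c x" "scaled_frame_compatible I d y"
    using assms unfolding Xplus_iff by blast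
  then show ?thesis
    unfolding Xplus_iff by (intro exI[of _ "c + d"] conjI scaled_frame_compatible_add) simp_all
qed

lemma Xplus_scale:
  assumes "x \<in> Xplus I" "0 \<le> k"
  shows "(\<lambda>n. k * x n) \<in> Xplus I"
proof -
  obtain c where "c \<ge> 0" "scaled_frame_compatible I c x"
    using assms(1) unfolding Xplus_iff by blast
  then show ?thesis
    unfolding Xplus_iff using assms(2) by (intro exI[of _ "k * c"] conjI scaled_frame_compatible_scale) simp_all
qed

lemma Xplus_max:
  assumes "x \<in> Xplus I" "y \<in> Xplus I"
  shows "(\<lambda>n. max (x n) (y n)) \<in> Xplus I"
proof -
  obtain c d where "c \<ge> 0" "d \<ge> 0" "scaled_frame_compatible I c x" "scaled_frame_compatible I d y"
    using assms unfolding Xplus_iff by blast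
  then have "scaled_frame_compatible I (c + d) x" "scaled_frame_compatible I (c + d) y"
    by (auto elim: scaled_frame_compatible_mono)
  then have "scaled_frame_compatible I (c + d) (\<lambda>n. max (x n) (y n))"
    by (rule scaled_frame_compatible_max)
  then show ?thesis
    unfolding Xplus_iff using \<open>c \<ge> 0\<close> \<open>d \<ge> 0\<close> by (intro exI[of _ "c + d"] conjI) simp_all
qed

lemma Xplus_zero: "(\<lambda>n. 0) \<in> Xplus I"
  unfolding Xplus_iff scaled_frame_compatible_def by auto

lemma Xplus_card:
  assumes "\<And>n. finite (I n)" "\<And>n. I n \<subseteq> I (Suc n)"
  shows "(\<lambda>n. real (card (I n))) \<in> Xplus I"
proof -
  have "card (I (Suc n) - I n) = card (I (Suc n)) - card (I n)" for n
    using assms by (simp add: card_Diff_subset)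
  moreover have "card (I n) \<le> card (I (Suc n))" for n
    using assms by (simp add: card_mono)
  ultimately have "scaled_frame_compatible I 1 (\<lambda>n. real (card (I n)))"
    unfolding scaled_frame_compatible_def by (auto simp: of_nat_diff)
  then show ?thesis
    unfolding Xplus_iff by (auto intro!: exI[of _ 1])
qed

lemma XR_I: "a \<in> Xplus I \<Longrightarrow> b \<in> Xplus I \<Longrightarrow> x = (\<lambda>n. a n - b n) \<Longrightarrow> x \<in> XR I"
  unfolding XR_def by blast

lemma XR_E:
  assumes "x \<in> XR I"
  obtains a b where "a \<in> Xplus I" "b \<in> Xplus I" "x = (\<lambda>n. a n - b n)"
  using assms unfolding XR_def by blast

lemma Xplus_XR: "a \<in> Xplus I \<Longrightarrow> a \<in> XR I"
  by (rule XR_I[OF _ Xplus_zero]) simp_all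

lemma XR_add: "x \<in> XR I \<Longrightarrow> y \<in> XR I \<Longrightarrow> (\<lambda>n. x n + y n) \<in> XR I"
proof (elim XR_E)
  fix a b c d assume "a \<in> Xplus I" "b \<in> Xplus I" "c \<in> Xplus I" "d \<in> Xplus I"
    and "x = (\<lambda>n. a n - b n)" "y = (\<lambda>n. c n - d n)"
  then show ?thesis
    by (intro XR_I[of "\<lambda>n. a n + c n" _ "\<lambda>n. b n + d n"] Xplus_add) auto
qed

lemma XR_scale: "x \<in> XR I \<Longrightarrow> (\<lambda>n. k * x n) \<in> XR I"
proof (elim XR_E)
  fix a b assume ab: "a \<in> Xplus I" "b \<in> Xplus I" and x: "x = (\<lambda>n. a n - b n)"
  show ?thesis
  proof (cases "k \<ge> 0")
    case True
    then show ?thesis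
      using ab by (intro XR_I[of "\<lambda>n. k * a n" _ "\<lambda>n. k * b n"] Xplus_scale)
        (auto simp: x algebra_simps)
  next
    case False
    then show ?thesis
      using ab by (intro XR_I[of "\<lambda>n. (- k) * b n" _ "\<lambda>n. (- k) * a n"] Xplus_scale)
        (auto simp: x algebra_simps)
  qed
qed

lemma XR_diff: "x \<in> XR I \<Longrightarrow> y \<in> XR I \<Longrightarrow> (\<lambda>n. x n - y n) \<in> XR I"
  using XR_add[of x I "\<lambda>n. (-1) * y n"] XR_scale[of y I "-1"] by simp

lemma XR_max: "x \<in> XR I \<Longrightarrow> y \<in> XR I \<Longrightarrow> (\<lambda>n. max (x n) (y n)) \<in> XR I"
proof (elim XR_E)
  fix a b c d assume "a \<in> Xplus I" "b \<in> Xplus I" "c \<in> Xplus I" "d \<in> Xplus I"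
    and "x = (\<lambda>n. a n - b n)" "y = (\<lambda>n. c n - d n)"
  then show ?thesis
    by (intro XR_I[of "\<lambda>n. max (a n + d n) (c n + b n)" _ "\<lambda>n. b n + d n"] Xplus_max Xplus_add)
      (auto simp: max_def)
qed

lemma XR_min: "x \<in> XR I \<Longrightarrow> y \<in> XR I \<Longrightarrow> (\<lambda>n. min (x n) (y n)) \<in> XR I"
proof -
  assume "x \<in> XR I" "y \<in> XR I"
  then have "(\<lambda>n. (-1) * max ((-1) * x n) ((-1) * y n)) \<in> XR I"
    by (intro XR_scale XR_max)
  moreover have "(\<lambda>n. (-1) * max ((-1) * x n) ((-1) * y n)) = (\<lambda>n. min (x n) (y n))"
    by (auto simp: max_def min_def)
  ultimately show ?thesis by simp
qed

definition asymp_nonpos :: "(nat \<Rightarrow> 'a set) \<Rightarrow> (nat \<Rightarrow> real) \<Rightarrow> bool" where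
  "asymp_nonpos I u \<longleftrightarrow> (\<forall>t>0. eventually (\<lambda>n. u n / real (card (I n)) < t) sequentially)"

lemma seq_leqq_iff_asymp_nonpos: "seq_leqq I x y \<longleftrightarrow> asymp_nonpos I (\<lambda>n. x n - y n)"
proof -
  have neg: "(y n - x n) / real (card (I n)) = - ((x n - y n) / real (card (I n)))" for n
    by (simp add: minus_divide_left)
  show ?thesis
    unfolding seq_leqq_def le_Liminf_iff asymp_nonpos_def
  proof (intro iffI allI impI)
    fix t :: real
    assume L: "\<forall>e<0. eventually (\<lambda>n. e < ereal ((y n - x n) / real (card (I n)))) sequentially"
      and "t > 0"
    then have "ereal (- t) < 0" by simp
    with L have "eventually (\<lambda>n. ereal (- t) < ereal ((y n - x n) / real (card (I n)))) sequentially"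
      by blast
    then show "eventually (\<lambda>n. (x n - y n) / real (card (I n)) < t) sequentially"
      by (rule eventually_mono) (simp add: neg)
  next
    fix e :: ereal assume R: "\<forall>t>0. eventually (\<lambda>n. (x n - y n) / real (card (I n)) < t) sequentially"
      and "e < 0"
    then show "eventually (\<lambda>n. e < ereal ((y n - x n) / real (card (I n)))) sequentially"
    proof (cases e)
      case (real r)
      then have "eventually (\<lambda>n. (x n - y n) / real (card (I n)) < - r) sequentially"
        using R \<open>e < 0\<close> by simp
      then show ?thesis
        by (rule eventually_mono) (simp add: real neg)
    qed auto
  qed
qed

lemma seq_approx_iff_asymp_nonpos:
  "seq_approx I x y \<longleftrightarrow> asymp_nonpos I (\<lambda>n. x n - y n) \<and> asymp_nonpos I (\<lambda>n. y n - x n)"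
proof -
  have neg: "(y n - x n) / real (card (I n)) = - ((x n - y n) / real (card (I n)))" for n
    by (simp add: minus_divide_left)
  show ?thesis
    unfolding seq_approx_def asymp_nonpos_def tendsto_iff dist_real_def neg abs_less_iff
      eventually_conj_iff by auto
qed

lemma ratio_less_if_min_gaps_less:
  fixes a b c u t \<delta> :: real
  assumes "0 \<le> c" "0 < t" "0 < \<delta>"
    and a: "min (u - t / 2 * c) (\<delta> * c - (max a b - a)) / c < min (t / 2) \<delta>"
    and b: "min (u - t / 2 * c) (\<delta> * c - (max a b - b)) / c < min (t / 2) \<delta>"
  shows "u / c < t"
proof (rule ccontr)
  assume "\<not> u / c < t"
  with assms(1,2) have c: "c > 0"
    by (cases "c = 0") auto
  with \<open>\<not> u / c < t\<close> have "t * c \<le> u"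
    by (simp add: not_less le_divide_eq)
  moreover have "min (t / 2) \<delta> * c \<le> t / 2 * c" "min (t / 2) \<delta> * c \<le> \<delta> * c"
    using c by (simp_all add: mult_right_mono)
  ultimately have "min (t / 2) \<delta> * c \<le> u - t / 2 * c" "min (t / 2) \<delta> * c \<le> \<delta> * c"
    by linarith+
  moreover have "max a b - a = 0 \<or> max a b - b = 0"
    by (simp add: max_def)
  ultimately have "min (t / 2) \<delta> * c \<le> min (u - t / 2 * c) (\<delta> * c - (max a b - a))
      \<or> min (t / 2) \<delta> * c \<le> min (u - t / 2 * c) (\<delta> * c - (max a b - b))"
    by auto
  then have "min (t / 2) \<delta> \<le> min (u - t / 2 * c) (\<delta> * c - (max a b - a)) / c
      \<or> min (t / 2) \<delta> \<le> min (u - t / 2 * c) (\<delta> * c - (max a b - b)) / c"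
    by (simp only: pos_le_divide_eq[OF c])
  with a b show False
    by linarith
qed

section \<open>Sequence measure functions\<close>

locale sequence_measure_function =
  fixes I :: "nat \<Rightarrow> 'a set"
    and m :: "(nat \<Rightarrow> real) \<Rightarrow> 'w::topological_space \<Rightarrow> real"
  assumes finite_I: "\<And>n. finite (I n)"
    and I_mono: "\<And>n. I n \<subseteq> I (Suc n)"
    and smf: "seq_measure_fun_on I UNIV m"
begin

lemma card_XR: "(\<lambda>n. real (card (I n))) \<in> XR I"
  using finite_I I_mono by (intro Xplus_XR Xplus_card)

lemma m_cont: "x \<in> XR I \<Longrightarrow> continuous_on UNIV (m x)"
  using smf unfolding seq_measure_fun_on_def by blast

lemma m_add: "x \<in> XR I \<Longrightarrow> y \<in> XR I \<Longrightarrow> m (\<lambda>n. x n + y n) w = m x w + m y w"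
  using smf unfolding seq_measure_fun_on_def by blast

lemma m_scale: "x \<in> XR I \<Longrightarrow> m (\<lambda>n. k * x n) w = k * m x w"
  using smf unfolding seq_measure_fun_on_def by blast

lemma m_card: "m (\<lambda>n. real (card (I n))) w = 1"
  using smf unfolding seq_measure_fun_on_def by blast

lemma m_approx: "x \<in> XR I \<Longrightarrow> y \<in> XR I \<Longrightarrow> seq_approx I x y \<Longrightarrow> m x w = m y w"
  using smf unfolding seq_measure_fun_on_def by blast

lemma m_order: "x \<in> Xplus I \<Longrightarrow> y \<in> Xplus I \<Longrightarrow> (\<forall>w. m x w \<le> m y w) \<longleftrightarrow> seq_leqq I x y"
  using smf unfolding seq_measure_fun_on_def by blast

lemma m_diff: "x \<in> XR I \<Longrightarrow> y \<in> XR I \<Longrightarrow> m (\<lambda>n. x n - y n) w = m x w - m y w"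
  using m_add[of x "\<lambda>n. (-1) * y n" w] m_scale[of y "-1" w] XR_scale[of y I "-1"] by simp

lemma m_const: "m (\<lambda>n. k * real (card (I n))) w = k"
  using m_scale[OF card_XR] m_card by simp

lemma m_nonpos_iff: "u \<in> XR I \<Longrightarrow> (\<forall>w. m u w \<le> 0) \<longleftrightarrow> asymp_nonpos I u"
proof (elim XR_E)
  fix a b assume ab: "a \<in> Xplus I" "b \<in> Xplus I" and u: "u = (\<lambda>n. a n - b n)"
  have "(\<forall>w. m u w \<le> 0) \<longleftrightarrow> (\<forall>w. m a w \<le> m b w)"
    unfolding u using m_diff[OF Xplus_XR[OF ab(1)] Xplus_XR[OF ab(2)]] by simp
  also have "\<dots> \<longleftrightarrow> asymp_nonpos I u"
    unfolding m_order[OF ab] seq_leqq_iff_asymp_nonpos u ..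
  finally show ?thesis .
qed

lemma m_mono:
  assumes "x \<in> XR I" "y \<in> XR I" and "\<And>n. x n \<le> y n"
  shows "m x w \<le> m y w"
proof -
  have "asymp_nonpos I (\<lambda>n. x n - y n)"
    unfolding asymp_nonpos_def using assms(3)
    by (auto intro!: always_eventually le_less_trans[OF divide_nonpos_nonneg])
  then have "m (\<lambda>n. x n - y n) w \<le> 0"
    using m_nonpos_iff[OF XR_diff[OF assms(1,2)]] by blast
  then show ?thesis
    using m_diff[OF assms(1,2)] by simp
qed

lemma seq_measure_fun_on_restrict:
  assumes "\<And>u. u \<in> XR I \<Longrightarrow> \<forall>w\<in>V. m u w \<le> 0 \<Longrightarrow> asymp_nonpos I u"
  shows "seq_measure_fun_on I V m"
proof -
  have approx: "(\<forall>w\<in>V. m x w = m y w) \<longleftrightarrow> seq_approx I x y" if xy: "x \<in> XR I" "y \<in> XR I" for x y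
  proof
    assume "\<forall>w\<in>V. m x w = m y w"
    then have "\<forall>w\<in>V. m (\<lambda>n. x n - y n) w \<le> 0" "\<forall>w\<in>V. m (\<lambda>n. y n - x n) w \<le> 0"
      using m_diff[OF xy] m_diff[OF xy(2,1)] by simp_all
    then show "seq_approx I x y"
      unfolding seq_approx_iff_asymp_nonpos using assms XR_diff[OF xy] XR_diff[OF xy(2,1)] by simp
  next
    assume "seq_approx I x y"
    then show "\<forall>w\<in>V. m x w = m y w"
      using m_approx[OF xy] by simp
  qed
  have order: "(\<forall>w\<in>V. m x w \<le> m y w) \<longleftrightarrow> seq_leqq I x y" if xy: "x \<in> Xplus I" "y \<in> Xplus I" for x y
  proof
    assume "\<forall>w\<in>V. m x w \<le> m y w"
    then have "\<forall>w\<in>V. m (\<lambda>n. x n - y n) w \<le> 0"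
      using m_diff[OF Xplus_XR[OF xy(1)] Xplus_XR[OF xy(2)]] by simp
    then show "seq_leqq I x y"
      unfolding seq_leqq_iff_asymp_nonpos using assms XR_diff[OF Xplus_XR[OF xy(1)] Xplus_XR[OF xy(2)]]
      by simp
  next
    assume "seq_leqq I x y"
    then show "\<forall>w\<in>V. m x w \<le> m y w"
      using m_order[OF xy] by simp
  qed
  show ?thesis
    unfolding seq_measure_fun_on_def
  proof (intro conjI ballI allI)
    show "continuous_on V (m x)" if "x \<in> XR I" for x
      using m_cont[OF that] by (rule continuous_on_subset) simp
  qed (simp_all add: m_add m_scale m_card approx order)
qed

lemma asymp_nonpos_if_nonpos_near_max:
  assumes x: "x \<in> XR I" and y: "y \<in> XR I" and u: "u \<in> XR I" and "\<delta> > 0"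
    and nonpos: "\<And>w. m (\<lambda>n. max (x n) (y n)) w \<le> max (m x w) (m y w) + \<delta> \<Longrightarrow> m u w \<le> 0"
  shows "asymp_nonpos I u"
  unfolding asymp_nonpos_def
proof (intro allI impI)
  fix t :: real assume "t > 0"
  (* Whenever u_n >= t |I_n|, one of v x n, v y n is at least min (t/2) delta |I_n|, since
     max x_n y_n is x_n or y_n; while m (v r) > 0 at w would give m u w > 0 at a point near max. *)
  define v where "v r n = min (u n - t / 2 * real (card (I n)))
      (\<delta> * real (card (I n)) - (max (x n) (y n) - r n))" for r n
  have v_nonpos: "asymp_nonpos I (v r)"
    if r: "r \<in> XR I" "\<And>w. m r w \<le> max (m x w) (m y w)" for r
  proof -
    have A: "(\<lambda>n. u n - t / 2 * real (card (I n))) \<in> XR I"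
      using u by (intro XR_diff XR_scale card_XR)
    have B: "(\<lambda>n. \<delta> * real (card (I n)) - (max (x n) (y n) - r n)) \<in> XR I"
      using x y r(1) by (intro XR_diff XR_scale XR_max card_XR)
    have v: "v r \<in> XR I"
      using A B unfolding v_def by (rule XR_min)
    have "m (v r) w \<le> 0" for w
    proof (rule ccontr)
      assume pos: "\<not> m (v r) w \<le> 0"
      have "m (v r) w \<le> m (\<lambda>n. u n - t / 2 * real (card (I n))) w"
        using v A by (rule m_mono) (simp add: v_def)
      also have "\<dots> = m u w - t / 2"
        by (simp only: m_diff[OF u XR_scale[OF card_XR]] m_const)
      finally have "m u w > 0"
        using pos \<open>t > 0\<close> by simp
      have "m (v r) w \<le> m (\<lambda>n. \<delta> * real (card (I n)) - (max (x n) (y n) - r n)) w"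
        using v B by (rule m_mono) (simp add: v_def)
      also have "\<dots> = \<delta> - (m (\<lambda>n. max (x n) (y n)) w - m r w)"
        by (simp only: m_diff[OF XR_scale[OF card_XR] XR_diff[OF XR_max[OF x y] r(1)]]
            m_diff[OF XR_max[OF x y] r(1)] m_const)
      finally have "m (\<lambda>n. max (x n) (y n)) w \<le> max (m x w) (m y w) + \<delta>"
        using pos r(2)[of w] by simp
      with nonpos \<open>m u w > 0\<close> show False by force
    qed
    then show ?thesis
      using m_nonpos_iff[OF v] by blast
  qed
  have "min (t / 2) \<delta> > 0"
    using \<open>t > 0\<close> \<open>\<delta> > 0\<close> by simp
  then have "eventually (\<lambda>n. v x n / real (card (I n)) < min (t / 2) \<delta>) sequentially"
    and "eventually (\<lambda>n. v y n / real (card (I n)) < min (t / 2) \<delta>) sequentially"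
    using v_nonpos[OF x max.cobounded1] v_nonpos[OF y max.cobounded2]
    unfolding asymp_nonpos_def by blast+
  then show "eventually (\<lambda>n. u n / real (card (I n)) < t) sequentially"
  proof eventually_elim
    case (elim n)
    have "0 \<le> real (card (I n))" by simp
    from this \<open>t > 0\<close> \<open>\<delta> > 0\<close> elim[unfolded v_def] show ?case
      by (rule ratio_less_if_min_gaps_less)
  qed
qed

lemma m_max:
  assumes compact: "compact (UNIV :: 'w set)" and irreducible: "\<not> reducible_smf I UNIV m"
    and x: "x \<in> XR I" and y: "y \<in> XR I"
  shows "m (\<lambda>n. max (x n) (y n)) w0 = max (m x w0) (m y w0)"
proof (rule ccontr)
  define z where "z = (\<lambda>n. max (x n) (y n))"
  have z: "z \<in> XR I"
    unfolding z_def using x y by (rule XR_max)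
  have "m x w0 \<le> m z w0"
    using x z by (rule m_mono) (simp add: z_def)
  moreover have "m y w0 \<le> m z w0"
    using y z by (rule m_mono) (simp add: z_def)
  moreover assume "m (\<lambda>n. max (x n) (y n)) w0 \<noteq> max (m x w0) (m y w0)"
  ultimately have gap: "max (m x w0) (m y w0) < m z w0"
    unfolding z_def by linarith
  define \<delta> where "\<delta> = (m z w0 - max (m x w0) (m y w0)) / 2"
  have "\<delta> > 0"
    unfolding \<delta>_def using gap by simp
  have "m z w0 = max (m x w0) (m y w0) + 2 * \<delta>"
    unfolding \<delta>_def by (simp add: field_simps)
  define V where "V = {w. m z w \<le> max (m x w) (m y w) + \<delta>}"
  have "closed V"
    unfolding V_def using m_cont[OF z] m_cont[OF x] m_cont[OF y]
    by (intro closed_Collect_le continuous_intros)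
  then have "compact V"
    using compact_Int_closed[OF compact \<open>closed V\<close>] by simp
  moreover have "w0 \<notin> V"
    unfolding V_def using \<open>m z w0 = _\<close> \<open>\<delta> > 0\<close> by simp
  then have "V \<subset> UNIV"
    by blast
  moreover have "seq_measure_fun_on I V m"
  proof (rule seq_measure_fun_on_restrict)
    fix u assume u: "u \<in> XR I" and nonpos: "\<forall>w\<in>V. m u w \<le> 0"
    from x y u \<open>\<delta> > 0\<close> show "asymp_nonpos I u"
      by (rule asymp_nonpos_if_nonpos_near_max) (use nonpos in \<open>auto simp: V_def z_def\<close>)
  qed
  ultimately show False
    using irreducible unfolding reducible_smf_def by blast
qed

lemma m_image_dense:
  assumes compact: "compact (UNIV :: 'w set)" and minimal: "minimal_smf I UNIV m"
    and f: "continuous_on UNIV f" and e: "e > 0"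
  shows "\<exists>x\<in>XR I. \<forall>w. \<bar>m x w - f w\<bar> < e"
proof -
  have "\<exists>g\<in>m ` XR I. \<forall>w. \<bar>g w - f w\<bar> < e"
  proof (rule lattice_Stone_Weierstrass[OF compact _ _ _ _ _ _ f e])
    show "continuous_on UNIV g" if "g \<in> m ` XR I" for g
      using that m_cont by blast
    show "(\<lambda>w. g w + h w) \<in> m ` XR I" if gh: "g \<in> m ` XR I" "h \<in> m ` XR I" for g h
    proof -
      obtain x y where "x \<in> XR I" "y \<in> XR I" "g = m x" "h = m y"
        using gh by blast
      then show ?thesis
        by (intro image_eqI[where x="\<lambda>n. x n + y n"] XR_add) (auto simp: m_add)
    qed
    show "(\<lambda>w. c * g w) \<in> m ` XR I" if g: "g \<in> m ` XR I" for g c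
    proof -
      obtain x where "x \<in> XR I" "g = m x"
        using g by blast
      then show ?thesis
        by (intro image_eqI[where x="\<lambda>n. c * x n"] XR_scale) (auto simp: m_scale)
    qed
    show "(\<lambda>w. c) \<in> m ` XR I" for c
      by (intro image_eqI[where x="\<lambda>n. c * real (card (I n))"] XR_scale card_XR) (auto simp: m_const)
    show "(\<lambda>w. max (g w) (h w)) \<in> m ` XR I" if gh: "g \<in> m ` XR I" "h \<in> m ` XR I" for g h
    proof -
      obtain x y where "x \<in> XR I" "y \<in> XR I" "g = m x" "h = m y"
        using gh by blast
      moreover have "\<not> reducible_smf I UNIV m"
        using minimal unfolding minimal_smf_def by blast
      ultimately show ?thesis
        by (intro image_eqI[where x="\<lambda>n. max (x n) (y n)"] XR_max) (auto simp: m_max[OF compact])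
    qed
    show "\<exists>g\<in>m ` XR I. g s \<noteq> g t" if "s \<noteq> t" for s t
      using minimal that unfolding minimal_smf_def separable_smf_def by blast
  qed
  then show ?thesis by blast
qed

end

theorem theorem6p13:
  fixes I :: "nat \<Rightarrow> 'a set"
    and m :: "(nat \<Rightarrow> real) \<Rightarrow> 'w::t2_space \<Rightarrow> real"
  assumes "countable (\<Union>n. I n)"
    and "\<And>n. finite (I n)"
    and "\<And>n. I n \<subseteq> I (Suc n)"
    and "compact (UNIV :: 'w set)"
    and "seq_measure_fun_on I UNIV m"
    and "minimal_smf I UNIV m"
  shows "\<forall>f. continuous_on UNIV f \<longrightarrow>
           (\<forall>\<epsilon>>0. \<exists>x\<in>XR I. (SUP w. \<bar>m x w - f w\<bar>) < \<epsilon>)"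
proof (intro allI impI)
  fix f :: "'w \<Rightarrow> real" and \<epsilon> :: real
  assume f: "continuous_on UNIV f" and "\<epsilon> > 0"
  interpret sequence_measure_function I m
    using assms(2,3,5) by unfold_locales
  obtain x where x: "x \<in> XR I" and close: "\<And>w. \<bar>m x w - f w\<bar> < \<epsilon> / 2"
    using m_image_dense[OF assms(4,6) f] \<open>\<epsilon> > 0\<close> by (metis half_gt_zero)
  have "(SUP w. \<bar>m x w - f w\<bar>) \<le> \<epsilon> / 2"
    using close by (intro cSUP_least) (auto intro: less_imp_le)
  then show "\<exists>x\<in>XR I. (SUP w. \<bar>m x w - f w\<bar>) < \<epsilon>"
    using x \<open>\<epsilon> > 0\<close> by (intro bexI[of _ x]) simp_all
qed

end
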